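(* Let $F=\frac1{16}\begin{pmatrix}1&2&1\\2&4&2\\1&2&1\end{pmatrix}$ (Gaussian blur filter). Then the equation $F*X=B$ with the periodic boundary condition, for unknown $X\in\mathbb{R}^{m\times n}$, has a unique solution for every $B\in\mathbb{R}^{m\times n}$ if and only if $m,n\notin\{2l: l\in\mathbb{N}\}$.
   Context: $\mathbb{N}=\{1,2,3,\dots\}$. For $F=[f_{ij}]\in\mathbb{R}^{3\times3}$ and $X=[x_{ij}]\in\mathbb{R}^{m\times n}$, the convolution $F*X\in\mathbb{R}^{m\times n}$ is defined by $[F*X]_{ij}=\sum_{l_1=1}^3\sum_{l_2=1}^3 f_{l_1l_2}\,x_{i-l_1+2,\,j-l_2+2}$ for $1\le i\le m$, $1\le j\le n$, where the periodic boundary condition sets $x_{0j}=x_{mj}$, $x_{m+1,j}=x_{1j}$, $x_{i0}=x_{in}$, $x_{i,n+1}=x_{i1}$ (for all indices $i\in\{0,\dots,m+1\}$, $j\in\{0,\dots,n+1\}$, so corners are also determined, e.g. $x_{00}=x_{mn}$). *)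

theory Defs
  imports Complex_Main
begin

text \<open>Matrices in R^{m x n} are represented as functions int => int => real
  indexed by {1..m} x {1..n}, and extensional (zero) outside.\<close>

definition mats :: "nat \<Rightarrow> nat \<Rightarrow> (int \<Rightarrow> int \<Rightarrow> real) set" where
  "mats m n = {X. \<forall>i j. \<not> (i \<in> {1..int m} \<and> j \<in> {1..int n}) \<longrightarrow> X i j = 0}"

definition wrap :: "nat \<Rightarrow> int \<Rightarrow> int" where
  "wrap m k = (k - 1) mod int m + 1"

definition conv :: "(int \<Rightarrow> int \<Rightarrow> real) \<Rightarrow> nat \<Rightarrow> nat \<Rightarrow> (int \<Rightarrow> int \<Rightarrow> real) \<Rightarrow> (int \<Rightarrow> int \<Rightarrow> real)" where
  "conv F m n X = (\<lambda>i j. if i \<in> {1..int m} \<and> j \<in> {1..int n} then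
      (\<Sum>l1\<in>{1..3}. \<Sum>l2\<in>{1..3}. F l1 l2 * X (wrap m (i - l1 + 2)) (wrap n (j - l2 + 2)))
    else 0)"

definition gauss_filter :: "int \<Rightarrow> int \<Rightarrow> real" where
  "gauss_filter l1 l2 =
     (if l1 \<in> {1..3} \<and> l2 \<in> {1..3}
      then (if l1 = 2 then 2 else 1) * (if l2 = 2 then 2 else 1) / 16 else 0)"

end

theory Submission
  imports Defs
begin

text \<open>The Gaussian filter is the tensor square of the binomial filter
  \<open>f \<mapsto> (f(k-1) + 2 f(k) + f(k+1))/4\<close>, so on periodic extensions the convolution
  acts as this filter along rows and then along columns. The binomial filter is the square
  (up to a shift) of the two-point mean \<open>f \<mapsto> (f(k) + f(k+1))/2\<close>. For an odd period
  \<open>m\<close> the mean is inverted by the alternating sum \<open>\<Sum>a<m. (-1)^a g(k+a)\<close>, whose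
  pairs of adjacent terms telescope; so for odd \<open>m, n\<close> the equation is uniquely solvable.
  For an even period the alternating sequence \<open>(-1)^k\<close> is periodic and annihilated by the
  binomial filter, so the checkerboard matrix is a nonzero solution of \<open>F*X = 0\<close>.\<close>

lemma bij_betw_iff_unique_preimages:
  assumes "f ` A \<subseteq> B"
  shows "bij_betw f A B \<longleftrightarrow> (\<forall>b\<in>B. \<exists>!a. a \<in> A \<and> f a = b)"
  using assms unfolding bij_betw_def inj_on_def by blast

definition periodic :: "nat \<Rightarrow> (int \<Rightarrow> 'a) \<Rightarrow> bool" where
  "periodic m f \<longleftrightarrow> (\<forall>k. f (k + int m) = f k)"

definition shift :: "int \<Rightarrow> (int \<Rightarrow> 'a) \<Rightarrow> int \<Rightarrow> 'a" where
  "shift c f k = f (k + c)"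

lemma shift_shift [simp]: "shift a (shift b f) = shift (a + b) f"
  by (simp add: fun_eq_iff shift_def add.assoc)

lemma shift_0 [simp]: "shift 0 f = f"
  by (simp add: fun_eq_iff shift_def)

lemma periodic_shift: "periodic m f \<Longrightarrow> periodic m (shift c f)"
  unfolding periodic_def shift_def by (metis add.commute add.left_commute)

lemma periodic_add_mult:
  assumes "periodic m f"
  shows "f (k + int m * t) = f k"
proof (induction t rule: int_induct[where k = 0])
  case (step1 t)
  then show ?case
    using assms unfolding periodic_def by (metis add.assoc distrib_left mult.right_neutral)
next
  case (step2 t)
  then show ?case
    using assms unfolding periodic_def by (metis add.assoc diff_add_cancel distrib_left mult.right_neutral)
qed simp

definition mean2 :: "(int \<Rightarrow> 'a::field_char_0) \<Rightarrow> int \<Rightarrow> 'a" where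
  "mean2 f k = (f k + f (k + 1)) / 2"

definition mean2_inv :: "nat \<Rightarrow> (int \<Rightarrow> 'a::field_char_0) \<Rightarrow> int \<Rightarrow> 'a" where
  "mean2_inv m g k = (\<Sum>a<m. (-1) ^ a * g (k + int a))"

lemma alternating_sum_adjacent_telescope:
  assumes "odd m" "periodic m f"
  shows "(\<Sum>a<m. (-1) ^ a * (f (k + int a) + f (k + int a + 1))) = 2 * (f k :: 'a::comm_ring_1)"
proof -
  define g where "g a = (-1) ^ a * f (k + int a)" for a
  have "(\<Sum>a<m. (-1) ^ a * (f (k + int a) + f (k + int a + 1))) = (\<Sum>a<m. g a - g (Suc a))"
    by (rule sum.cong) (auto simp: g_def algebra_simps)
  also have "\<dots> = g 0 - g m" by (rule sum_lessThan_telescope')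
  also have "\<dots> = 2 * f k" using assms by (simp add: g_def periodic_def)
  finally show ?thesis .
qed

lemma periodic_mean2: "periodic m f \<Longrightarrow> periodic m (mean2 f)"
  using periodic_shift[of m f 1] by (simp add: periodic_def mean2_def shift_def)

lemma periodic_mean2_inv: "periodic m g \<Longrightarrow> periodic m (mean2_inv m g)"
  using periodic_shift[of m g] by (simp add: periodic_def mean2_inv_def shift_def)

lemma mean2_shift: "mean2 (shift c f) = shift c (mean2 f)"
  by (simp add: fun_eq_iff mean2_def shift_def ac_simps)

lemma mean2_inv_shift: "mean2_inv m (shift c g) = shift c (mean2_inv m g)"
  by (simp add: fun_eq_iff mean2_inv_def shift_def ac_simps)

lemma mean2_inv_mean2: "odd m \<Longrightarrow> periodic m f \<Longrightarrow> mean2_inv m (mean2 f) = f"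
  using alternating_sum_adjacent_telescope[of m f]
  by (simp add: fun_eq_iff mean2_inv_def mean2_def sum_divide_distrib[symmetric] add.assoc)

lemma mean2_mean2_inv: "odd m \<Longrightarrow> periodic m g \<Longrightarrow> mean2 (mean2_inv m g) = g"
  using alternating_sum_adjacent_telescope[of m g]
  by (simp add: fun_eq_iff mean2_inv_def mean2_def sum.distrib[symmetric] distrib_left ac_simps)

definition blur :: "(int \<Rightarrow> 'a::field_char_0) \<Rightarrow> int \<Rightarrow> 'a" where
  "blur f k = (f (k - 1) + 2 * f k + f (k + 1)) / 4"

definition blur_inv :: "nat \<Rightarrow> (int \<Rightarrow> 'a::field_char_0) \<Rightarrow> int \<Rightarrow> 'a" where
  "blur_inv m g = shift 1 (mean2_inv m (mean2_inv m g))"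

lemma blur_eq_mean2_mean2: "blur f = shift (-1) (mean2 (mean2 f))"
  by (simp add: fun_eq_iff blur_def mean2_def shift_def field_simps)

lemma periodic_blur: "periodic m f \<Longrightarrow> periodic m (blur f)"
  by (simp add: blur_eq_mean2_mean2 periodic_shift periodic_mean2)

lemma periodic_blur_inv: "periodic m g \<Longrightarrow> periodic m (blur_inv m g)"
  by (simp add: blur_inv_def periodic_shift periodic_mean2_inv)

lemma blur_inv_blur: "odd m \<Longrightarrow> periodic m f \<Longrightarrow> blur_inv m (blur f) = f"
  by (simp add: blur_inv_def blur_eq_mean2_mean2 mean2_inv_shift mean2_inv_mean2 periodic_mean2)

lemma blur_blur_inv: "odd m \<Longrightarrow> periodic m g \<Longrightarrow> blur (blur_inv m g) = g"
  by (simp add: blur_inv_def blur_eq_mean2_mean2 mean2_shift mean2_mean2_inv periodic_mean2_inv)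

definition periodic2 :: "nat \<Rightarrow> nat \<Rightarrow> (int \<Rightarrow> int \<Rightarrow> 'a) \<Rightarrow> bool" where
  "periodic2 m n Y \<longleftrightarrow> periodic m Y \<and> (\<forall>k. periodic n (Y k))"

lemma periodic2_column: "periodic2 m n Y \<Longrightarrow> periodic m (\<lambda>k. Y k l)"
  by (simp add: periodic2_def periodic_def)

lemma periodic2_row: "periodic2 m n Y \<Longrightarrow> periodic n (Y k)"
  by (simp add: periodic2_def)

definition blur2 :: "(int \<Rightarrow> int \<Rightarrow> 'a::field_char_0) \<Rightarrow> int \<Rightarrow> int \<Rightarrow> 'a" where
  "blur2 Y k l = blur (\<lambda>k'. blur (Y k') l) k"

definition blur2_inv :: "nat \<Rightarrow> nat \<Rightarrow> (int \<Rightarrow> int \<Rightarrow> 'a::field_char_0) \<Rightarrow> int \<Rightarrow> int \<Rightarrow> 'a" where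
  "blur2_inv m n Y k = blur_inv n (\<lambda>l. blur_inv m (\<lambda>k'. Y k' l) k)"

lemma blur2_tensor: "blur2 (\<lambda>k l. a k * b l) = (\<lambda>k l. blur a k * blur b l)"
  by (simp add: fun_eq_iff blur2_def blur_def field_simps)

lemma periodic2_blur2:
  assumes "periodic2 m n Y"
  shows "periodic2 m n (blur2 Y)"
proof -
  have "periodic m (\<lambda>k. blur (Y k) l)" for l
    using assms by (simp add: periodic2_def periodic_def)
  then have columns: "periodic m (blur2 Y)"
    by (simp add: periodic_def fun_eq_iff blur2_def periodic_blur[unfolded periodic_def])
  have rows: "periodic n (blur2 Y k)" for k
    using periodic_blur[OF periodic2_row[OF assms]] by (simp add: periodic_def blur2_def)
  show ?thesis
    using columns rows by (simp add: periodic2_def)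
qed

lemma periodic2_blur2_inv:
  assumes "periodic2 m n Y"
  shows "periodic2 m n (blur2_inv m n Y)"
proof -
  have "periodic m (\<lambda>k. blur_inv m (\<lambda>k'. Y k' l) k)" for l
    using periodic_blur_inv[OF periodic2_column[OF assms]] .
  then have columns: "periodic m (blur2_inv m n Y)"
    by (simp add: periodic_def fun_eq_iff blur2_inv_def)
  have "periodic n (\<lambda>l. blur_inv m (\<lambda>k'. Y k' l) k)" for k
    using assms by (simp add: periodic2_def periodic_def)
  then have rows: "periodic n (blur2_inv m n Y k)" for k
    by (simp add: blur2_inv_def periodic_blur_inv)
  show ?thesis
    using columns rows by (simp add: periodic2_def)
qed

lemma blur2_inv_blur2:
  assumes "odd m" "odd n" "periodic2 m n Y"
  shows "blur2_inv m n (blur2 Y) = Y"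
proof -
  have "periodic m (\<lambda>k. blur (Y k) l)" for l
    using assms(3) by (simp add: periodic2_def periodic_def)
  then have "blur_inv m (\<lambda>k'. blur2 Y k' l) = (\<lambda>k. blur (Y k) l)" for l
    using assms(1) by (simp add: blur2_def blur_inv_blur)
  then show ?thesis
    using assms by (simp add: fun_eq_iff blur2_inv_def blur_inv_blur periodic2_row)
qed

lemma blur2_blur2_inv:
  assumes "odd m" "odd n" "periodic2 m n Y"
  shows "blur2 (blur2_inv m n Y) = Y"
proof -
  define V where "V k = (\<lambda>l. blur_inv m (\<lambda>k'. Y k' l) k)" for k
  have "periodic n (V k)" for k
    using assms(3) by (simp add: V_def periodic2_def periodic_def)
  then have "blur (blur2_inv m n Y k) = V k" for k
    using assms(2) by (simp add: V_def blur2_inv_def blur_blur_inv)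
  then show ?thesis
    using assms by (simp add: fun_eq_iff blur2_def V_def blur_blur_inv periodic2_column)
qed

lemma wrap_in_range:
  assumes "1 \<le> m"
  shows "wrap m k \<in> {1..int m}"
proof -
  have m_pos: "0 < int m"
    using assms by simp
  show ?thesis
    using pos_mod_bound[OF m_pos, of "k - 1"] pos_mod_sign[OF m_pos, of "k - 1"] by (simp add: wrap_def)
qed

lemma wrap_eq_self: "k \<in> {1..int m} \<Longrightarrow> wrap m k = k"
  by (simp add: wrap_def)

lemma periodic_wrap: "periodic m (wrap m)"
  by (simp add: periodic_def wrap_def diff_add_eq[symmetric])

lemma periodic_apply_wrap:
  assumes "periodic m f"
  shows "f (wrap m k) = f k"
proof -
  have "wrap m k = k + int m * - ((k - 1) div int m)"
    by (simp add: wrap_def minus_div_mult_eq_mod[symmetric] algebra_simps)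
  then show ?thesis
    using periodic_add_mult[OF assms, of k "- ((k - 1) div int m)"] by simp
qed

lemma even_wrap_iff: "even m \<Longrightarrow> even (wrap m k) \<longleftrightarrow> even k"
  by (simp add: wrap_def dvd_mod_iff)

definition periodic_ext :: "nat \<Rightarrow> nat \<Rightarrow> (int \<Rightarrow> int \<Rightarrow> 'a) \<Rightarrow> int \<Rightarrow> int \<Rightarrow> 'a" where
  "periodic_ext m n X = (\<lambda>k l. X (wrap m k) (wrap n l))"

definition restrict_mats :: "nat \<Rightarrow> nat \<Rightarrow> (int \<Rightarrow> int \<Rightarrow> real) \<Rightarrow> int \<Rightarrow> int \<Rightarrow> real" where
  "restrict_mats m n Y i j = (if i \<in> {1..int m} \<and> j \<in> {1..int n} then Y i j else 0)"

lemma restrict_mats_in_mats: "restrict_mats m n Y \<in> mats m n"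
  by (simp add: mats_def restrict_mats_def)

lemma periodic2_periodic_ext: "periodic2 m n (periodic_ext m n X)"
  using periodic_wrap[of m] periodic_wrap[of n]
  by (simp add: periodic2_def periodic_def periodic_ext_def fun_eq_iff)

lemma periodic_ext_restrict_mats:
  assumes "1 \<le> m" "1 \<le> n"
  shows "periodic_ext m n (restrict_mats m n Y) = periodic_ext m n Y"
  using wrap_in_range[OF assms(1)] wrap_in_range[OF assms(2)]
  by (simp add: fun_eq_iff periodic_ext_def restrict_mats_def)

lemma periodic_ext_periodic2: "periodic2 m n Y \<Longrightarrow> periodic_ext m n Y = Y"
  by (simp add: fun_eq_iff periodic_ext_def periodic2_def periodic_apply_wrap)

lemma restrict_mats_periodic_ext: "X \<in> mats m n \<Longrightarrow> restrict_mats m n (periodic_ext m n X) = X"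
  by (auto simp: fun_eq_iff mats_def restrict_mats_def periodic_ext_def wrap_eq_self)

lemma conv_gauss_filter_eq_blur2:
  "conv gauss_filter m n X = restrict_mats m n (blur2 (periodic_ext m n X))"
proof -
  have "{1..3::int} = {1, 2, 3}"
    by auto
  then show ?thesis
    by (simp add: fun_eq_iff conv_def restrict_mats_def gauss_filter_def blur2_def blur_def
        periodic_ext_def field_simps)
qed

lemma conv_gauss_filter_in_mats: "conv gauss_filter m n X \<in> mats m n"
  by (simp add: conv_gauss_filter_eq_blur2 restrict_mats_in_mats)

lemma periodic_ext_conv_gauss_filter:
  assumes "1 \<le> m" "1 \<le> n"
  shows "periodic_ext m n (conv gauss_filter m n X) = blur2 (periodic_ext m n X)"
  by (simp add: conv_gauss_filter_eq_blur2 periodic_ext_restrict_mats[OF assms]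
      periodic_ext_periodic2 periodic2_blur2 periodic2_periodic_ext)

lemma conv_gauss_filter_inj_on:
  assumes "odd m" "odd n"
  shows "inj_on (conv gauss_filter m n) (mats m n)"
proof (rule inj_onI)
  fix X X'
  assume X: "X \<in> mats m n" and X': "X' \<in> mats m n"
    and same_conv: "conv gauss_filter m n X = conv gauss_filter m n X'"
  have m_n_pos: "1 \<le> m" "1 \<le> n"
    using assms by (simp_all add: odd_pos Suc_leI)
  have "blur2 (periodic_ext m n X) = blur2 (periodic_ext m n X')"
    using same_conv by (simp flip: periodic_ext_conv_gauss_filter[OF m_n_pos])
  then have "blur2_inv m n (blur2 (periodic_ext m n X)) = blur2_inv m n (blur2 (periodic_ext m n X'))"
    by (rule arg_cong)
  then have "periodic_ext m n X = periodic_ext m n X'"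
    by (simp only: blur2_inv_blur2[OF assms periodic2_periodic_ext])
  then show "X = X'"
    by (metis restrict_mats_periodic_ext X X')
qed

lemma conv_gauss_filter_image:
  assumes "odd m" "odd n"
  shows "conv gauss_filter m n ` mats m n = mats m n"
proof
  show "conv gauss_filter m n ` mats m n \<subseteq> mats m n"
    using conv_gauss_filter_in_mats by blast
  show "mats m n \<subseteq> conv gauss_filter m n ` mats m n"
  proof
    fix B
    assume B: "B \<in> mats m n"
    have m_n_pos: "1 \<le> m" "1 \<le> n"
      using assms by (simp_all add: odd_pos Suc_leI)
    define X where "X = restrict_mats m n (blur2_inv m n (periodic_ext m n B))"
    have "periodic_ext m n X = blur2_inv m n (periodic_ext m n B)"
      by (simp add: X_def periodic_ext_restrict_mats[OF m_n_pos] periodic_ext_periodic2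
          periodic2_blur2_inv periodic2_periodic_ext)
    then have "B = conv gauss_filter m n X"
      by (simp add: conv_gauss_filter_eq_blur2 blur2_blur2_inv assms periodic2_periodic_ext
          restrict_mats_periodic_ext B)
    moreover have "X \<in> mats m n"
      by (simp add: X_def restrict_mats_in_mats)
    ultimately show "B \<in> conv gauss_filter m n ` mats m n"
      by (blast intro: rev_image_eqI)
  qed
qed

lemma conv_gauss_filter_bij_betw:
  "odd m \<Longrightarrow> odd n \<Longrightarrow> bij_betw (conv gauss_filter m n) (mats m n) (mats m n)"
  by (simp add: bij_betw_def conv_gauss_filter_inj_on conv_gauss_filter_image)

definition alternating :: "int \<Rightarrow> 'a::ring_1" where
  "alternating k = (if even k then 1 else -1)"

lemma blur_alternating: "blur alternating = (\<lambda>k. 0)"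
  by (simp add: fun_eq_iff blur_def alternating_def)

lemma alternating_wrap: "even m \<Longrightarrow> alternating (wrap m k) = alternating k"
  by (simp add: alternating_def even_wrap_iff)

lemma conv_gauss_filter_checkerboard:
  assumes "1 \<le> m" "1 \<le> n" "even m \<or> even n"
  shows "conv gauss_filter m n (restrict_mats m n (\<lambda>i j. alternating i * alternating j)) = (\<lambda>i j. 0)"
proof -
  have "blur (\<lambda>k. alternating (wrap m k) :: real) = (\<lambda>k. 0) \<or>
      blur (\<lambda>l. alternating (wrap n l) :: real) = (\<lambda>l. 0)"
    using assms(3) by (auto simp: alternating_wrap blur_alternating)
  then have blur2_zero:
      "blur2 (periodic_ext m n (\<lambda>i j. alternating i * alternating j :: real)) = (\<lambda>k l. 0)"
    by (auto simp: periodic_ext_def blur2_tensor)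
  have "conv gauss_filter m n (restrict_mats m n (\<lambda>i j. alternating i * alternating j)) =
      restrict_mats m n (blur2 (periodic_ext m n (\<lambda>i j. alternating i * alternating j)))"
    by (simp only: conv_gauss_filter_eq_blur2 periodic_ext_restrict_mats[OF assms(1,2)])
  also have "\<dots> = (\<lambda>i j. 0)"
    by (simp add: blur2_zero restrict_mats_def fun_eq_iff)
  finally show ?thesis .
qed

lemma conv_gauss_filter_not_inj_on:
  assumes "1 \<le> m" "1 \<le> n" "even m \<or> even n"
  shows "\<not> inj_on (conv gauss_filter m n) (mats m n)"
proof
  assume inj: "inj_on (conv gauss_filter m n) (mats m n)"
  define C where "C = restrict_mats m n (\<lambda>i j. alternating i * alternating j)"
  have "conv gauss_filter m n C = conv gauss_filter m n (\<lambda>i j. 0)"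
    using conv_gauss_filter_checkerboard[OF assms] by (simp add: C_def conv_def fun_eq_iff)
  moreover have "(\<lambda>i j. 0) \<in> mats m n"
    by (simp add: mats_def)
  ultimately have "C = (\<lambda>i j. 0)"
    using inj_onD[OF inj] restrict_mats_in_mats unfolding C_def by blast
  moreover have "C 1 1 = 1"
    using assms by (simp add: C_def restrict_mats_def alternating_def)
  ultimately show False
    by simp
qed

theorem corollary5:
  fixes m n :: nat
  assumes "m \<ge> 1" and "n \<ge> 1"
  shows "(\<forall>B \<in> mats m n. \<exists>!X. X \<in> mats m n \<and> conv gauss_filter m n X = B)
         \<longleftrightarrow> (m \<notin> {2 * l | l. l \<ge> 1} \<and> n \<notin> {2 * l | l. l \<ge> 1})"
proof -
  have not_even_iff: "k \<notin> {2 * l | l. l \<ge> 1} \<longleftrightarrow> odd k" if "k \<ge> 1" for k :: nat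
    using that by (auto elim!: evenE)
  have "conv gauss_filter m n ` mats m n \<subseteq> mats m n"
    using conv_gauss_filter_in_mats by blast
  then have "(\<forall>B \<in> mats m n. \<exists>!X. X \<in> mats m n \<and> conv gauss_filter m n X = B)
      \<longleftrightarrow> bij_betw (conv gauss_filter m n) (mats m n) (mats m n)"
    by (rule bij_betw_iff_unique_preimages[symmetric])
  also have "\<dots> \<longleftrightarrow> odd m \<and> odd n"
  proof
    show "bij_betw (conv gauss_filter m n) (mats m n) (mats m n) \<Longrightarrow> odd m \<and> odd n"
      using assms conv_gauss_filter_not_inj_on bij_betw_imp_inj_on by blast
    show "odd m \<and> odd n \<Longrightarrow> bij_betw (conv gauss_filter m n) (mats m n) (mats m n)"
      by (simp add: conv_gauss_filter_bij_betw)
  qed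
  finally show ?thesis
    using assms not_even_iff by simp
qed

end
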